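(* Let $T_{skewcw,2}=\sum_{\sigma\in S_3}\operatorname{sgn}(\sigma)\, e_{\sigma(1)}\otimes e_{\sigma(2)}\otimes e_{\sigma(3)}\in \Lambda^3\mathbb{C}^3\subset\mathbb{C}^3\otimes\mathbb{C}^3\otimes\mathbb{C}^3$ (where $e_1,e_2,e_3$ is a basis of $\mathbb{C}^3$), and let $W=a_1\otimes b_1\otimes c_2+a_1\otimes b_2\otimes c_1+a_2\otimes b_1\otimes c_1\in\mathbb{C}^2\otimes\mathbb{C}^2\otimes\mathbb{C}^2$ (with $\{a_i\},\{b_j\},\{c_k\}$ bases of the three copies of $\mathbb{C}^2$). Then the Kronecker product $T_{skewcw,2}\boxtimes W\in\mathbb{C}^6\otimes\mathbb{C}^6\otimes\mathbb{C}^6$ has border rank nine.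
   Context: The border rank of a tensor is the smallest $s$ such that it is a limit of tensors that are sums of $s$ tensors of the form $a\otimes b\otimes c$. For $T\in A\otimes B\otimes C$ and $T'\in A'\otimes B'\otimes C'$, the Kronecker product $T\boxtimes T'$ is $T\otimes T'$ regarded as an element of $(A\otimes A')\otimes(B\otimes B')\otimes(C\otimes C')$. *)

theory Defs
  imports "HOL-Analysis.Analysis" "HOL-Library.Numeral_Type" "HOL-Combinatorics.Permutations"
begin

text \<open>A tensor in A \<otimes> B \<otimes> C, with A = C^'a, B = C^'b, C = C^'c (finite index types),
  is represented by its coordinate array with respect to the chosen bases.\<close>
type_synonym ('a, 'b, 'c) tensor = "'a \<Rightarrow> 'b \<Rightarrow> 'c \<Rightarrow> complex"

definition rank_le_set :: "nat \<Rightarrow> ('a, 'b, 'c) tensor set" where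
  "rank_le_set s = {T. \<exists>(x :: nat \<Rightarrow> 'a \<Rightarrow> complex) (y :: nat \<Rightarrow> 'b \<Rightarrow> complex)
       (z :: nat \<Rightarrow> 'c \<Rightarrow> complex).
       T = (\<lambda>i j k. \<Sum>l<s. x l i * y l j * z l k)}"

definition border_rank :: "('a::finite, 'b::finite, 'c::finite) tensor \<Rightarrow> nat" where
  "border_rank T = (LEAST s. \<exists>S :: nat \<Rightarrow> ('a, 'b, 'c) tensor.
      (\<forall>n. S n \<in> rank_le_set s) \<and> (\<forall>i j k. (\<lambda>n. S n i j k) \<longlonglongrightarrow> T i j k))"

definition kron :: "('a, 'b, 'c) tensor \<Rightarrow> ('d, 'e, 'f) tensor \<Rightarrow> ('a \<times> 'd, 'b \<times> 'e, 'c \<times> 'f) tensor" where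
  "kron T T' = (\<lambda>(i, i') (j, j') (k, k'). T i j k * T' i' j' k')"

text \<open>T_{skewcw,2} = sum over sigma in S_3 of sgn(sigma) e_{sigma(1)} \<otimes> e_{sigma(2)} \<otimes> e_{sigma(3)};
  the basis e_1, e_2, e_3 is indexed by the elements 0, 1, 2 of the type 3.\<close>
definition T_skewcw2 :: "(3, 3, 3) tensor" where
  "T_skewcw2 = (\<lambda>i j k. \<Sum>\<sigma> \<in> {\<sigma>. \<sigma> permutes (UNIV :: 3 set)}.
      of_int (sign \<sigma>) * (if \<sigma> 0 = i \<and> \<sigma> 1 = j \<and> \<sigma> 2 = k then 1 else 0))"

text \<open>W = a_1 \<otimes> b_1 \<otimes> c_2 + a_1 \<otimes> b_2 \<otimes> c_1 + a_2 \<otimes> b_1 \<otimes> c_1, with index 1 \<mapsto> 0 and 2 \<mapsto> 1 of type 2.\<close>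
definition W_tensor :: "(2, 2, 2) tensor" where
  "W_tensor = (\<lambda>i j k. if (i, j, k) \<in> {(0, 0, 1), (0, 1, 0), (1, 0, 0)} then 1 else 0)"

end

theory Submission
  imports Defs
begin

text \<open>Write \<open>\<epsilon>\<close> for T_skewcw2, the Levi-Civita symbol, and \<open>e\<close> for \<open>e\<^sub>1 \<otimes> e\<^sub>2 \<otimes> e\<^sub>3\<close>.
  Upper bound: \<open>\<epsilon> - e\<close> and \<open>\<epsilon> - 2e\<close> have rank 4, so
  \<open>t\<^sup>-\<^sup>1 ((\<epsilon> - e) \<otimes> (a\<^sub>1 + t a\<^sub>2)\<^sup>\<otimes>\<^sup>3 - e \<otimes> (a\<^sub>1 - t a\<^sub>2)\<^sup>\<otimes>\<^sup>3 - (\<epsilon> - 2e) \<otimes> a\<^sub>1\<^sup>\<otimes>\<^sup>3)\<close>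
  has rank at most 9. Its \<open>t\<^sup>-\<^sup>1\<close> term cancels and its \<open>t\<^sup>0\<close> term is \<open>((\<epsilon> - e) + e) \<otimes> W\<close>, so it
  tends to \<open>\<epsilon> \<boxtimes> W\<close> as \<open>t \<rightarrow> 0\<close>.
  Lower bound: restrict the tensor to \<open>a\<^sub>1\<^sup>*\<close> in the \<open>A'\<close> factor and take the Koszul flattening
  \<open>A \<otimes> (B \<otimes> B')\<^sup>* \<rightarrow> \<Lambda>\<^sup>2 A \<otimes> (C \<otimes> C')\<close>, an 18 \<times> 18 matrix. A rank-one tensor \<open>a \<otimes> b \<otimes> c\<close>
  contributes \<open>(a \<and> _) \<otimes> b\<^sup>* \<otimes> c\<close>, which has rank 2. For \<open>\<epsilon> \<boxtimes> W\<close> the flattening is invertible,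
  so 9 rank-one terms are needed, and the determinant is continuous, so this also bounds the
  border rank.\<close>

definition border_approximable :: "nat \<Rightarrow> ('a, 'b, 'c) tensor \<Rightarrow> bool" where
  "border_approximable s T \<longleftrightarrow>
     (\<exists>S. (\<forall>n. S n \<in> rank_le_set s) \<and> (\<forall>i j k. (\<lambda>n. S n i j k) \<longlonglongrightarrow> T i j k))"

lemma border_rank_eqI:
  fixes T :: "('a::finite, 'b::finite, 'c::finite) tensor"
  assumes "border_approximable r T" and "\<And>s. border_approximable s T \<Longrightarrow> r \<le> s"
  shows "border_rank T = r"
  using assms unfolding border_rank_def border_approximable_def by (intro Least_equality) blast+

lemma rank_le_setI:
  fixes x :: "'l \<Rightarrow> 'a \<Rightarrow> complex" and y :: "'l \<Rightarrow> 'b \<Rightarrow> complex"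
    and z :: "'l \<Rightarrow> 'c \<Rightarrow> complex"
  assumes "finite L" and "card L \<le> s"
  shows "(\<lambda>i j k. \<Sum>l\<in>L. x l i * y l j * z l k) \<in> rank_le_set s"
proof -
  obtain g where g: "g ` L \<subseteq> {..<s}" "inj_on g L"
    using card_le_inj[of L "{..<s}"] assms by auto
  define h where "h = the_inv_into L g"
  define x' where "x' m = (if m \<in> g ` L then x (h m) else (\<lambda>_. 0))" for m
  have "(\<Sum>l\<in>L. x l i * y l j * z l k) = (\<Sum>m<s. x' m i * y (h m) j * z (h m) k)" for i j k
  proof -
    have "(\<Sum>l\<in>L. x l i * y l j * z l k) = (\<Sum>m\<in>g ` L. x (h m) i * y (h m) j * z (h m) k)"
      using g(2) by (simp add: sum.reindex h_def the_inv_into_f_f)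
    also have "\<dots> = (\<Sum>m<s. x' m i * y (h m) j * z (h m) k)"
      using g(1) by (intro sum.mono_neutral_cong_left) (auto simp: x'_def)
    finally show ?thesis .
  qed
  then show ?thesis
    unfolding rank_le_set_def
    by (intro CollectI exI[of _ x'] exI[of _ "\<lambda>m. y (h m)"] exI[of _ "\<lambda>m. z (h m)"]) auto
qed

lemma rank_le_set_add:
  assumes "S \<in> rank_le_set m" and "T \<in> rank_le_set n"
  shows "(\<lambda>i j k. S i j k + T i j k) \<in> rank_le_set (m + n)"
proof -
  obtain x y z where S: "S = (\<lambda>i j k. \<Sum>l<m. x l i * y l j * z l k)"
    using assms(1) unfolding rank_le_set_def by blast
  obtain x' y' z' where T: "T = (\<lambda>i j k. \<Sum>l<n. x' l i * y' l j * z' l k)"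
    using assms(2) unfolding rank_le_set_def by blast
  have "(\<lambda>i j k. S i j k + T i j k) = (\<lambda>i j k. \<Sum>l\<in>{..<m} <+> {..<n}.
          case_sum x x' l i * case_sum y y' l j * case_sum z z' l k)"
    by (simp add: S T sum.Plus comp_def)
  also have "\<dots> \<in> rank_le_set (m + n)"
    by (rule rank_le_setI) (simp_all add: card_Plus)
  finally show ?thesis .
qed

lemma rank_le_set_scale:
  assumes "T \<in> rank_le_set s"
  shows "(\<lambda>i j k. c * T i j k) \<in> rank_le_set s"
proof -
  obtain x y z where T: "T = (\<lambda>i j k. \<Sum>l<s. x l i * y l j * z l k)"
    using assms unfolding rank_le_set_def by blast
  have "(\<lambda>i j k. c * T i j k) = (\<lambda>i j k. \<Sum>l<s. (c * x l i) * y l j * z l k)"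
    by (simp add: T sum_distrib_left mult_ac)
  also have "\<dots> \<in> rank_le_set s"
    by (rule rank_le_setI) simp_all
  finally show ?thesis .
qed

lemma rank_le_set_reindex:
  assumes "T \<in> rank_le_set s"
  shows "(\<lambda>i j k. T (f i) (g j) (h k)) \<in> rank_le_set s"
proof -
  obtain x y z where T: "T = (\<lambda>i j k. \<Sum>l<s. x l i * y l j * z l k)"
    using assms unfolding rank_le_set_def by blast
  have "(\<lambda>i j k. T (f i) (g j) (h k)) = (\<lambda>i j k. \<Sum>l<s. x l (f i) * y l (g j) * z l (h k))"
    by (simp add: T)
  also have "\<dots> \<in> rank_le_set s"
    by (rule rank_le_setI) simp_all
  finally show ?thesis .
qed

lemma rank_one_in_rank_le_set: "(\<lambda>i j k. u i * v j * w k) \<in> rank_le_set 1"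
  unfolding rank_le_set_def by (rule CollectI, rule exI[of _ "\<lambda>_. u"]) auto

lemma kron_in_rank_le_set:
  assumes "S \<in> rank_le_set m" and "T \<in> rank_le_set n"
  shows "kron S T \<in> rank_le_set (m * n)"
proof -
  obtain x y z where S: "S = (\<lambda>i j k. \<Sum>l<m. x l i * y l j * z l k)"
    using assms(1) unfolding rank_le_set_def by blast
  obtain x' y' z' where T: "T = (\<lambda>i j k. \<Sum>l<n. x' l i * y' l j * z' l k)"
    using assms(2) unfolding rank_le_set_def by blast
  have "kron S T (i, i') (j, j') (k, k')
      = (\<Sum>l<m. \<Sum>l'<n. (x l i * y l j * z l k) * (x' l' i' * y' l' j' * z' l' k'))"
    for i i' j j' k k'
    by (simp add: kron_def S T flip: sum_product)
  then have "kron S T = (\<lambda>I J K. \<Sum>p\<in>{..<m} \<times> {..<n}.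
          (x (fst p) (fst I) * x' (snd p) (snd I)) * (y (fst p) (fst J) * y' (snd p) (snd J))
          * (z (fst p) (fst K) * z' (snd p) (snd K)))"
    by (simp add: fun_eq_iff split_paired_All sum.cartesian_product' mult_ac)
  also have "\<dots> \<in> rank_le_set (m * n)"
    by (rule rank_le_setI) (simp_all add: card_cartesian_product)
  finally show ?thesis .
qed

lemma cases_3: "(x::3) = 0 \<or> x = 1 \<or> x = 2"
proof -
  have "(3::3) = 0" by simp
  then show ?thesis using exhaust_3[of x] by auto
qed

lemma cases_2: "(x::2) = 0 \<or> x = 1"
proof -
  have "(2::2) = 0" by simp
  then show ?thesis using exhaust_2[of x] by auto
qed

lemma UNIV_3_eq: "(UNIV :: 3 set) = {0, 1, 2}"
  using cases_3 by auto

lemma UNIV_2_eq: "(UNIV :: 2 set) = {0, 1}"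
  using cases_2 by auto

lemma sum_UNIV_3: "sum f (UNIV :: 3 set) = f 0 + f 1 + f 2"
  unfolding UNIV_3_eq by (simp add: ac_simps)

lemma sum_UNIV_2: "sum f (UNIV :: 2 set) = f 0 + f 1"
  unfolding UNIV_2_eq by simp

definition levi_civita :: "(3, 3, 3) tensor" where
  "levi_civita i j k =
     (if (i, j, k) \<in> {(0, 1, 2), (1, 2, 0), (2, 0, 1)} then 1
      else if (i, j, k) \<in> {(0, 2, 1), (2, 1, 0), (1, 0, 2)} then -1 else 0)"

lemma T_skewcw2_compose_transpose:
  fixes a b :: 3
  assumes "a \<noteq> b"
  defines "t \<equiv> Transposition.transpose a b"
  shows "(\<Sum>\<sigma>\<in>{\<sigma>. \<sigma> permutes UNIV}. of_int (sign \<sigma>) *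
      (if \<sigma> (t 0) = i \<and> \<sigma> (t 1) = j \<and> \<sigma> (t 2) = k then 1 else 0)) = - T_skewcw2 i j k"
proof -
  have t: "t permutes UNIV" "permutation t" "sign t = -1"
    using assms by (simp_all add: permutes_swap_id permutation_swap_id sign_swap_id)
  have "T_skewcw2 i j k = (\<Sum>\<sigma>\<in>{\<sigma>. \<sigma> permutes UNIV}. of_int (sign (\<sigma> \<circ> t)) *
      (if (\<sigma> \<circ> t) 0 = i \<and> (\<sigma> \<circ> t) 1 = j \<and> (\<sigma> \<circ> t) 2 = k then 1 else 0))"
    unfolding T_skewcw2_def by (rule sum_permutations_compose_right[OF t(1)])
  also have "\<dots> = - (\<Sum>\<sigma>\<in>{\<sigma>. \<sigma> permutes UNIV}. of_int (sign \<sigma>) *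
      (if \<sigma> (t 0) = i \<and> \<sigma> (t 1) = j \<and> \<sigma> (t 2) = k then 1 else 0))"
    unfolding sum_negf[symmetric]
    by (intro sum.cong refl) (simp add: sign_compose t(2,3) permutes_imp_permutation)
  finally show ?thesis
    by simp
qed

lemma T_skewcw2_swap_12: "T_skewcw2 i j k = - T_skewcw2 j i k"
  using T_skewcw2_compose_transpose[of 0 1 j i k]
  by (simp add: T_skewcw2_def conj_ac)

lemma T_skewcw2_swap_23: "T_skewcw2 i j k = - T_skewcw2 i k j"
  using T_skewcw2_compose_transpose[of 1 2 i k j]
  by (simp add: T_skewcw2_def conj_ac)

lemma T_skewcw2_0_1_2: "T_skewcw2 0 1 2 = 1"
proof -
  have id_iff: "\<sigma> 0 = 0 \<and> \<sigma> 1 = 1 \<and> \<sigma> 2 = 2 \<longleftrightarrow> \<sigma> = id" for \<sigma> :: "3 \<Rightarrow> 3"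
    by (auto simp: fun_eq_iff) (metis cases_3)
  have "T_skewcw2 0 1 2 = (\<Sum>\<sigma>\<in>{\<sigma>. \<sigma> permutes (UNIV :: 3 set)}. if \<sigma> = id then of_int (sign \<sigma>) else 0)"
    unfolding T_skewcw2_def id_iff by (rule sum.cong) simp_all
  also have "\<dots> = 1"
    by (subst sum.delta) (auto simp: finite_permutations permutes_id)
  finally show ?thesis .
qed

lemma T_skewcw2_eq_levi_civita: "T_skewcw2 = levi_civita"
proof (intro ext)
  fix i j k :: 3
  have zero_12: "T_skewcw2 i i k = 0" for i k
    using T_skewcw2_swap_12[of i i k] by simp
  have zero_23: "T_skewcw2 i j j = 0" for i j
    using T_skewcw2_swap_23[of i j j] by simp
  have zero_13: "T_skewcw2 i j i = 0" for i j
    using T_skewcw2_swap_12[of i j i] zero_23[of j i] by simp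
  have v021: "T_skewcw2 0 2 1 = -1"
    unfolding T_skewcw2_swap_23[of 0 2 1] T_skewcw2_0_1_2 ..
  have v102: "T_skewcw2 1 0 2 = -1"
    unfolding T_skewcw2_swap_12[of 1 0 2] T_skewcw2_0_1_2 ..
  have v120: "T_skewcw2 1 2 0 = 1"
    unfolding T_skewcw2_swap_23[of 1 2 0] v102 by simp
  have v201: "T_skewcw2 2 0 1 = 1"
    unfolding T_skewcw2_swap_12[of 2 0 1] v021 by simp
  have v210: "T_skewcw2 2 1 0 = -1"
    unfolding T_skewcw2_swap_23[of 2 1 0] v201 ..
  show "T_skewcw2 i j k = levi_civita i j k"
    using cases_3[of i] cases_3[of j] cases_3[of k]
    by (elim disjE) (simp_all add: zero_12 zero_23 zero_13 T_skewcw2_0_1_2 v021 v102 v120 v201 v210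
        levi_civita_def)
qed

section \<open>Koszul flattenings\<close>

definition cross_product_matrix :: "(3 \<Rightarrow> complex) \<Rightarrow> 3 \<Rightarrow> 3 \<Rightarrow> complex" where
  "cross_product_matrix v q p = (\<Sum>r\<in>UNIV. levi_civita q p r * v r)"

lemma cross_product_matrix_rank_2:
  "\<exists>u w u' w'. \<forall>q p. cross_product_matrix v q p = u q * w p + u' q * w' p"
proof -
  let ?M = "cross_product_matrix v"
  have M: "?M q p = (\<Sum>r\<in>UNIV. levi_civita q p r * v r)" for q p
    by (simp add: cross_product_matrix_def)
  consider "v 0 \<noteq> 0" | "v 0 = 0" "v 1 \<noteq> 0" | "v 0 = 0" "v 1 = 0"
    by blast
  then show ?thesis
  proof cases
    \<comment> \<open>\<open>v\<close> lies in the kernel, so one column is a combination of the other two.\<close>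
    case 1
    have factor: "?M q p = ?M q 1 * (of_bool (p = 1) - v 1 / v 0 * of_bool (p = 0))
        + ?M q 2 * (of_bool (p = 2) - v 2 / v 0 * of_bool (p = 0))" for q p
      using 1 cases_3[of q] cases_3[of p]
      by (elim disjE) (simp_all add: M sum_UNIV_3 levi_civita_def field_simps)
    then show ?thesis
      by (intro exI allI) (rule factor)
  next
    case 2
    have factor: "?M q p = ?M q 0 * of_bool (p = 0)
        + ?M q 2 * (of_bool (p = 2) - v 2 / v 1 * of_bool (p = 1))" for q p
      using 2 cases_3[of q] cases_3[of p]
      by (elim disjE) (simp_all add: M sum_UNIV_3 levi_civita_def field_simps)
    then show ?thesis
      by (intro exI allI) (rule factor)
  next
    case 3
    have factor: "?M q p = ?M q 0 * of_bool (p = 0) + ?M q 1 * of_bool (p = 1)" for q p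
      using 3 cases_3[of q] cases_3[of p]
      by (elim disjE) (simp_all add: M sum_UNIV_3 levi_civita_def)
    then show ?thesis
      by (intro exI allI) (rule factor)
  qed
qed

lemma det_eq_0_if_factors_through:
  fixes M :: "'a::field^'n^'n"
  assumes "finite L" and "card L < CARD('n)"
    and M: "\<And>a b. M $ a $ b = (\<Sum>t\<in>L. U a t * V t b)"
  shows "det M = 0"
proof -
  obtain g :: "_ \<Rightarrow> 'n" where g: "inj_on g L"
    using card_le_inj[of L "UNIV :: 'n set"] assms(1,2) by auto
  have "card (g ` L) < CARD('n)"
    using g assms(2) by (simp add: card_image)
  then obtain c where c: "c \<notin> g ` L"
    by (metis UNIV_I less_irrefl subsetI subset_antisym)
  define h where "h = the_inv_into L g"
  define U' :: "'a^'n^'n" where "U' = (\<chi> a d. if d \<in> g ` L then U a (h d) else 0)"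
  define V' :: "'a^'n^'n" where "V' = (\<chi> d b. V (h d) b)"
  have "(U' ** V') $ a $ b = M $ a $ b" for a b
  proof -
    have "(U' ** V') $ a $ b = (\<Sum>d\<in>UNIV. if d \<in> g ` L then U a (h d) * V (h d) b else 0)"
      by (auto simp: matrix_matrix_mult_def U'_def V'_def intro: sum.cong)
    also have "\<dots> = (\<Sum>d\<in>g ` L. U a (h d) * V (h d) b)"
      using sum.inter_restrict[of UNIV "\<lambda>d. U a (h d) * V (h d) b" "g ` L"] by simp
    also have "\<dots> = M $ a $ b"
      using g by (simp add: M sum.reindex h_def the_inv_into_f_f)
    finally show ?thesis .
  qed
  then have "M = U' ** V'"
    by (simp add: vec_eq_iff)
  moreover have "column c U' = 0"
    using c by (simp add: column_def U'_def vec_eq_iff)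
  then have "det U' = 0"
    by (rule det_zero_column(2))
  ultimately show ?thesis
    by (simp add: det_mul)
qed

text \<open>The Koszul flattening \<open>T\<^sub>A\<^sup>\<and>\<^sup>1 : A \<otimes> B\<^sup>* \<rightarrow> \<Lambda>\<^sup>2 A \<otimes> C\<close> for \<open>A = \<complex>\<^sup>3\<close> and \<open>B = C\<close>, with
  \<open>\<Lambda>\<^sup>2 \<complex>\<^sup>3\<close> identified with \<open>\<complex>\<^sup>3\<close> via the Levi-Civita symbol; rows are indexed by
  \<open>\<Lambda>\<^sup>2 A \<otimes> C\<close>, columns by \<open>A \<otimes> B\<^sup>*\<close>.\<close>
definition koszul_flattening :: "(3, 'b, 'b) tensor \<Rightarrow> complex^(3 \<times> 'b::finite)^(3 \<times> 'b)" where
  "koszul_flattening T = (\<chi> a b. \<Sum>r\<in>UNIV. levi_civita (fst a) (fst b) r * T r (snd b) (snd a))"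

lemma det_koszul_flattening_eq_0:
  fixes T :: "(3, 'b::finite, 'b) tensor"
  assumes "T \<in> rank_le_set s" and "2 * s < CARD(3 \<times> 'b)"
  shows "det (koszul_flattening T) = 0"
proof -
  obtain x y z where T: "T = (\<lambda>i j k. \<Sum>l<s. x l i * y l j * z l k)"
    using assms(1) unfolding rank_le_set_def by blast
  have "\<forall>l. \<exists>u w u' w'. \<forall>q p. cross_product_matrix (x l) q p = u q * w p + u' q * w' p"
    using cross_product_matrix_rank_2 by blast
  then obtain u w u' w' where uw:
    "\<And>l q p. cross_product_matrix (x l) q p = u l q * w l p + u' l q * w' l p"
    by metis
  define U where "U a t = (if snd t then u else u') (fst t) (fst a) * z (fst t) (snd a)"
    for a :: "3 \<times> 'b" and t :: "nat \<times> bool"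
  define V where "V t b = (if snd t then w else w') (fst t) (fst b) * y (fst t) (snd b)"
    for b :: "3 \<times> 'b" and t :: "nat \<times> bool"
  show ?thesis
  proof (rule det_eq_0_if_factors_through[where U = U and V = V])
    show "finite ({..<s} \<times> (UNIV :: bool set))"
      by simp
    show "card ({..<s} \<times> (UNIV :: bool set)) < CARD(3 \<times> 'b)"
      using assms(2) by (simp add: card_cartesian_product mult.commute)
    fix a b :: "3 \<times> 'b"
    have "koszul_flattening T $ a $ b
        = (\<Sum>l<s. cross_product_matrix (x l) (fst a) (fst b) * y l (snd b) * z l (snd a))"
      unfolding koszul_flattening_def cross_product_matrix_def T
      by (simp add: sum_distrib_left sum_distrib_right mult_ac sum.swap[where B = "{..<s}"])
    also have "\<dots> = (\<Sum>t\<in>{..<s} \<times> UNIV. U a t * V t b)"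
      by (simp add: uw U_def V_def sum.cartesian_product' UNIV_bool algebra_simps)
    finally show "koszul_flattening T $ a $ b = (\<Sum>t\<in>{..<s} \<times> UNIV. U a t * V t b)" .
  qed
qed

lemma tendsto_det:
  fixes A :: "'x \<Rightarrow> 'a::real_normed_field^'n^'n"
  assumes "\<And>i j. ((\<lambda>x. A x $ i $ j) \<longlongrightarrow> B $ i $ j) F"
  shows "((\<lambda>x. det (A x)) \<longlongrightarrow> det B) F"
  unfolding det_def by (intro tendsto_intros assms)

lemma border_approximable_koszul_bound:
  fixes T :: "('a, 'b::finite, 'b) tensor" and f :: "3 \<Rightarrow> 'a"
  assumes "border_approximable s T" and "det (koszul_flattening (\<lambda>r. T (f r))) \<noteq> 0"
  shows "CARD(3 \<times> 'b) \<le> 2 * s"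
proof (rule ccontr)
  assume "\<not> CARD(3 \<times> 'b) \<le> 2 * s"
  then have small: "2 * s < CARD(3 \<times> 'b)"
    by simp
  obtain S where S: "\<And>n. S n \<in> rank_le_set s" "\<And>i j k. (\<lambda>n. S n i j k) \<longlonglongrightarrow> T i j k"
    using assms(1) unfolding border_approximable_def by blast
  have "det (koszul_flattening (\<lambda>r. S n (f r))) = 0" for n
    using rank_le_set_reindex[OF S(1), where f = f and g = "\<lambda>j. j" and h = "\<lambda>k. k"]
      det_koszul_flattening_eq_0[OF _ small]
    by simp
  moreover have "(\<lambda>n. det (koszul_flattening (\<lambda>r. S n (f r))))
      \<longlonglongrightarrow> det (koszul_flattening (\<lambda>r. T (f r)))"
    unfolding koszul_flattening_def by (intro tendsto_det) (simp, intro tendsto_intros S(2))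
  ultimately have "det (koszul_flattening (\<lambda>r. T (f r))) = 0"
    by (simp add: LIMSEQ_const_iff)
  with assms(2) show False
    by simp
qed

section \<open>The lower bound\<close>

lemma levi_civita_contract:
  "(\<Sum>r\<in>UNIV. levi_civita q p r * levi_civita r j k)
     = of_bool (q = j \<and> p = k) - of_bool (q = k \<and> p = j)"
  using cases_3[of q] cases_3[of p] cases_3[of j] cases_3[of k]
  by (elim disjE) (simp_all add: sum_UNIV_3 levi_civita_def)

lemma W_tensor_0: "W_tensor 0 j k = of_bool (j \<noteq> k)"
  using cases_2[of j] cases_2[of k] by (elim disjE) (simp_all add: W_tensor_def)

lemma koszul_flattening_skew_W_eq:
  "koszul_flattening (\<lambda>r. kron levi_civita W_tensor (r, 0)) $ (q, k, k') $ (p, j, j')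
     = (of_bool (q = j \<and> p = k) - of_bool (q = k \<and> p = j)) * of_bool (j' \<noteq> k')"
  by (simp add: koszul_flattening_def kron_def W_tensor_0 levi_civita_contract flip: sum_distrib_right)

lemma det_koszul_flattening_skew_W:
  "det (koszul_flattening (\<lambda>r. kron levi_civita W_tensor (r, 0))) \<noteq> 0"
proof -
  let ?K = "koszul_flattening (\<lambda>r. kron levi_civita W_tensor (r, 0))"
  \<comment> \<open>On \<open>\<complex>\<^sup>3 \<otimes> \<complex>\<^sup>3\<close> the flattening is \<open>v \<mapsto> v\<^sup>T - tr v \<cdot> 1\<close>, with inverse \<open>w \<mapsto> w\<^sup>T - tr w / 2 \<cdot> 1\<close>;
    on \<open>\<complex>\<^sup>2 \<otimes> \<complex>\<^sup>2\<close> it is the swap matrix, its own inverse.\<close>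
  define E :: "3 \<Rightarrow> 3 \<Rightarrow> 3 \<Rightarrow> 3 \<Rightarrow> complex"
    where "E q k p j = of_bool (q = j \<and> p = k) - of_bool (q = k \<and> p = j)" for q k p j
  define F :: "3 \<Rightarrow> 3 \<Rightarrow> 3 \<Rightarrow> 3 \<Rightarrow> complex"
    where "F p j q k = of_bool (p = k \<and> j = q) - of_bool (p = j \<and> q = k) / 2" for p j q k
  define S :: "2 \<Rightarrow> 2 \<Rightarrow> complex"
    where "S j k = of_bool (j \<noteq> k)" for j k
  define B :: "complex^(3 \<times> 3 \<times> 2)^(3 \<times> 3 \<times> 2)"
    where "B = vec_lambda (\<lambda>(p, j, j'). vec_lambda (\<lambda>(q, k, k'). F p j q k * S j' k'))"
  have K: "?K $ (q, k, k') $ (p, j, j') = E q k p j * S j' k'" for q k k' p j j'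
    by (simp add: koszul_flattening_skew_W_eq E_def S_def)
  have EF: "(\<Sum>p\<in>UNIV. \<Sum>j\<in>UNIV. E q k p j * F p j q' m) = of_bool (q = q' \<and> k = m)" for q k q' m
    using cases_3[of q] cases_3[of k] cases_3[of q'] cases_3[of m]
    by (elim disjE) (simp_all add: sum_UNIV_3 E_def F_def)
  have SS: "(\<Sum>j\<in>UNIV. S j k * S j m) = of_bool (k = m)" for k m
    using cases_2[of k] cases_2[of m] by (elim disjE) (simp_all add: sum_UNIV_2 S_def)
  have "(?K ** B) $ (q, k, k') $ (q', m, m') = mat 1 $ (q, k, k') $ (q', m, m')" for q k k' q' m m'
  proof -
    have "(?K ** B) $ (q, k, k') $ (q', m, m')
        = (\<Sum>p\<in>UNIV. \<Sum>j\<in>UNIV. E q k p j * F p j q' m * (\<Sum>j'\<in>UNIV. S j' k' * S j' m'))"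
      by (simp add: matrix_matrix_mult_def K B_def UNIV_Times_UNIV[symmetric]
          sum.cartesian_product' sum_distrib_left mult_ac del: UNIV_Times_UNIV)
    also have "\<dots> = (\<Sum>p\<in>UNIV. \<Sum>j\<in>UNIV. E q k p j * F p j q' m) * (\<Sum>j'\<in>UNIV. S j' k' * S j' m')"
      by (simp add: sum_distrib_right)
    also have "\<dots> = mat 1 $ (q, k, k') $ (q', m, m')"
      by (simp add: EF SS mat_def)
    finally show ?thesis .
  qed
  then have "?K ** B = mat 1"
    by (simp add: vec_eq_iff)
  then have "det ?K * det B = 1"
    by (metis det_I det_mul)
  then show ?thesis
    by auto
qed

section \<open>The upper bound\<close>

definition basis_012 :: "(3, 3, 3) tensor" where
  "basis_012 i j k = of_bool (i = 0) * of_bool (j = 1) * of_bool (k = 2)"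

definition vec3 :: "complex \<Rightarrow> complex \<Rightarrow> complex \<Rightarrow> 3 \<Rightarrow> complex" where
  "vec3 a b c i = (if i = 0 then a else if i = 1 then b else c)"

lemma vec3_simps [simp]: "vec3 a b c 0 = a" "vec3 a b c 1 = b" "vec3 a b c 2 = c"
  by (simp_all add: vec3_def)

lemma sum_lessThan_4: "(\<Sum>l<(4::nat). f l) = f 0 + f 1 + f 2 + (f 3 :: complex)"
  by (simp add: eval_nat_numeral)

lemma levi_civita_minus_basis_012_rank_4:
  "(\<lambda>i j k. levi_civita i j k - basis_012 i j k) \<in> rank_le_set 4"
proof -
  define x where "x = [vec3 1 (-1) (-1), vec3 0 0 (-1), vec3 0 1 1, vec3 0 (-1) 0]"
  define y where "y = [vec3 0 0 1, vec3 1 (-1) (-1), vec3 1 0 (-1), vec3 1 0 0]"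
  define z where "z = [vec3 0 (-1) 0, vec3 (-1) 0 0, vec3 (-1) 1 0, vec3 (-1) 1 1]"
  have "(\<lambda>i j k. levi_civita i j k - basis_012 i j k)
      = (\<lambda>i j k. \<Sum>l<4. (x ! l) i * (y ! l) j * (z ! l) k)"
  proof (intro ext)
    fix i j k :: 3
    show "levi_civita i j k - basis_012 i j k = (\<Sum>l<4. (x ! l) i * (y ! l) j * (z ! l) k)"
      using cases_3[of i] cases_3[of j] cases_3[of k]
      by (elim disjE) (simp_all add: sum_lessThan_4 x_def y_def z_def levi_civita_def basis_012_def)
  qed
  then show ?thesis
    unfolding rank_le_set_def by blast
qed

lemma levi_civita_minus_2_basis_012_rank_4:
  "(\<lambda>i j k. levi_civita i j k - 2 * basis_012 i j k) \<in> rank_le_set 4"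
proof -
  define x where "x = [vec3 (-1/4) (1/4) (-1/4), vec3 (1/4) (-1/4) (-1/4), vec3 (1/4) (1/4) (1/4),
    vec3 (-1/4) (-1/4) (1/4)]"
  define y where "y = [vec3 1 (-1) (-1), vec3 1 (-1) 1, vec3 1 1 (-1), vec3 1 1 1]"
  define z where "z = [vec3 (-1) (-1) (-1), vec3 (-1) (-1) 1, vec3 (-1) 1 (-1), vec3 (-1) 1 1]"
  have "(\<lambda>i j k. levi_civita i j k - 2 * basis_012 i j k)
      = (\<lambda>i j k. \<Sum>l<4. (x ! l) i * (y ! l) j * (z ! l) k)"
  proof (intro ext)
    fix i j k :: 3
    show "levi_civita i j k - 2 * basis_012 i j k = (\<Sum>l<4. (x ! l) i * (y ! l) j * (z ! l) k)"
      using cases_3[of i] cases_3[of j] cases_3[of k]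
      by (elim disjE) (simp_all add: sum_lessThan_4 x_def y_def z_def levi_civita_def basis_012_def)
  qed
  then show ?thesis
    unfolding rank_le_set_def by blast
qed

definition weight :: "2 \<Rightarrow> nat" where
  "weight i = (if i = 0 then 0 else 1)"

text \<open>The vector \<open>a\<^sub>1 + t a\<^sub>2\<close>; since \<open>0 ^ 0 = 1\<close>, \<open>line_vector 0\<close> is \<open>a\<^sub>1\<close>.\<close>
definition line_vector :: "complex \<Rightarrow> 2 \<Rightarrow> complex" where
  "line_vector t i = t ^ weight i"

definition cube :: "('a \<Rightarrow> complex) \<Rightarrow> ('a, 'a, 'a) tensor" where
  "cube u i j k = u i * u j * u k"

lemma cube_line_vector: "cube (line_vector t) i j k = t ^ (weight i + weight j + weight k)"
  by (simp add: cube_def line_vector_def power_add)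

lemma cube_in_rank_le_set: "cube u \<in> rank_le_set 1"
  unfolding cube_def by (rule rank_one_in_rank_le_set)

lemma W_tensor_eq_weight: "W_tensor i j k = of_bool (weight i + weight j + weight k = 1)"
  using cases_2[of i] cases_2[of j] cases_2[of k]
  by (elim disjE) (simp_all add: W_tensor_def weight_def)

definition skew_W_approx :: "complex \<Rightarrow> (3 \<times> 2, 3 \<times> 2, 3 \<times> 2) tensor" where
  "skew_W_approx t I J K =
     (kron (\<lambda>i j k. levi_civita i j k - basis_012 i j k) (cube (line_vector t)) I J K
      - kron basis_012 (cube (line_vector (- t))) I J K
      - kron (\<lambda>i j k. levi_civita i j k - 2 * basis_012 i j k) (cube (line_vector 0)) I J K) / t"

lemma skew_W_approx_rank: "skew_W_approx t \<in> rank_le_set 9"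
proof -
  have "skew_W_approx t = (\<lambda>I J K.
      (1 / t) * kron (\<lambda>i j k. levi_civita i j k - basis_012 i j k) (cube (line_vector t)) I J K
      + ((- 1 / t) * kron basis_012 (cube (line_vector (- t))) I J K
      + (- 1 / t) * kron (\<lambda>i j k. levi_civita i j k - 2 * basis_012 i j k)
          (cube (line_vector 0)) I J K))"
    by (simp add: fun_eq_iff skew_W_approx_def diff_divide_distrib)
  also have "\<dots> \<in> rank_le_set (4 * 1 + (1 * 1 + 4 * 1))"
    by (intro rank_le_set_add rank_le_set_scale kron_in_rank_le_set cube_in_rank_le_set
        levi_civita_minus_basis_012_rank_4 levi_civita_minus_2_basis_012_rank_4)
      (unfold basis_012_def[abs_def], rule rank_one_in_rank_le_set)
  finally show ?thesis
    by simp
qed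

lemma tendsto_degeneration:
  fixes X P :: "'a::real_normed_field"
  shows "((\<lambda>t. (X * t ^ m - P * (- t) ^ m - (X - P) * 0 ^ m) / t)
            \<longlongrightarrow> (if m = 1 then X + P else 0)) (at 0)"
proof (cases m)
  case 0
  then show ?thesis
    by simp
next
  case (Suc n)
  have "(X - P * (- 1) ^ m) * t ^ n = (X * t ^ m - P * (- t) ^ m - (X - P) * 0 ^ m) / t"
    if "t \<noteq> 0" for t
  proof -
    have "(0::'a) ^ m = 0"
      using Suc by simp
    then have "(X * t ^ m - P * (- t) ^ m - (X - P) * 0 ^ m) / t = (X - P * (- 1) ^ m) * t ^ m / t"
      unfolding power_minus[of t m] by (simp add: algebra_simps)
    also have "\<dots> = (X - P * (- 1) ^ m) * t ^ n"
      using that by (simp add: Suc)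
    finally show ?thesis
      by simp
  qed
  then have "eventually (\<lambda>t. (X - P * (- 1) ^ m) * t ^ n
      = (X * t ^ m - P * (- t) ^ m - (X - P) * 0 ^ m) / t) (at 0)"
    by (simp add: eventually_at_filter)
  moreover have "((\<lambda>t. (X - P * (- 1) ^ m) * t ^ n) \<longlongrightarrow> (if m = 1 then X + P else 0)) (at 0)"
  proof -
    have "((\<lambda>t. (X - P * (- 1) ^ m) * t ^ n) \<longlongrightarrow> (X - P * (- 1) ^ m) * 0 ^ n) (at 0)"
      by (intro tendsto_intros)
    then show ?thesis
      by (cases n) (simp_all add: Suc)
  qed
  ultimately show ?thesis
    by (rule Lim_transform_eventually[rotated])
qed

lemma skew_W_approx_tendsto:
  "((\<lambda>t. skew_W_approx t I J K) \<longlongrightarrow> kron levi_civita W_tensor I J K) (at 0)"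
proof -
  obtain i i' j j' k k' where IJK: "I = (i, i')" "J = (j, j')" "K = (k, k')"
    by (metis prod.exhaust)
  define m where "m = weight i' + weight j' + weight k'"
  define X where "X = levi_civita i j k - basis_012 i j k"
  define P where "P = basis_012 i j k"
  have "skew_W_approx t I J K = (X * t ^ m - P * (- t) ^ m - (X - P) * 0 ^ m) / t" for t
    by (simp add: skew_W_approx_def kron_def cube_line_vector IJK m_def X_def P_def)
  moreover have "kron levi_civita W_tensor I J K = (if m = 1 then X + P else 0)"
    by (simp add: kron_def W_tensor_eq_weight IJK m_def X_def P_def)
  ultimately show ?thesis
    using tendsto_degeneration[of X m P] by simp
qed

lemma skew_W_border_approximable: "border_approximable 9 (kron levi_civita W_tensor)"
  unfolding border_approximable_def
proof (intro exI conjI allI)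
  show "skew_W_approx (inverse (of_nat n)) \<in> rank_le_set 9" for n
    by (rule skew_W_approx_rank)
  have "filterlim (\<lambda>n. inverse (of_nat n) :: complex) (at 0) sequentially"
    by (intro filterlim_atI lim_inverse_n eventually_sequentiallyI[of 1]) simp
  then show "(\<lambda>n. skew_W_approx (inverse (of_nat n)) I J K) \<longlonglongrightarrow> kron levi_civita W_tensor I J K"
    for I J K
    by (rule filterlim_compose[OF skew_W_approx_tendsto])
qed

theorem mainTheorem3:
  shows "border_rank (kron T_skewcw2 W_tensor) = 9"
  unfolding T_skewcw2_eq_levi_civita
proof (rule border_rank_eqI)
  show "border_approximable 9 (kron levi_civita W_tensor)"
    by (rule skew_W_border_approximable)
next
  fix s
  assume "border_approximable s (kron levi_civita W_tensor)"
  from border_approximable_koszul_bound[OF this, where f = "\<lambda>r. (r, 0)"]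
  show "9 \<le> s"
    using det_koszul_flattening_skew_W by simp
qed

end
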